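(* Let $m,n\ge0$ be integers, let $\mathbb{K}$ be a field of characteristic zero, and regard $m-n$ as an element of $\mathbb{K}$. Let $\lambda,\mu$ be bipartitions. (i) If $\lambda$ is almost $(m|n)$-cross, then $D_{\lambda,\mu}(m-n)=0$ whenever $\mu\ne\lambda$. (ii) If $\mu$ is almost $(m|n)$-cross, then $D_{\lambda,\mu}(m-n)=0$ unless $\lambda=\mu$ or $|\lambda|>|\mu|+2$.
   Context: A partition is a weakly decreasing sequence $\alpha=(\alpha_1,\alpha_2,\dots)$ of nonnegative integers, almost all zero, with size $|\alpha|=\sum_i\alpha_i$. A bipartition is a pair $\lambda=(\lambda^\bullet,\lambda^\circ)$ of partitions, with size $|\lambda|=|\lambda^\bullet|+|\lambda^\circ|$. A bipartition $\lambda$ is $(m|n)$-cross if there exists $0\le k\le m$ with $\lambda^\bullet_{k+1}+\lambda^\circ_{m-k+1}\le n$. It is almost $(m|n)$-cross if it is not $(m|n)$-cross but every bipartition strictly contained in it (componentwise containment) is $(m|n)$-cross. Set $I_\wedge(\lambda)=\{\lambda^\bullet_i-(i-1):i\ge1\}$ and $I_\vee(\lambda,\delta)=\{i-\delta-\lambda^\circ_i:i\ge1\}$. The weight diagram $x_\lambda(\delta)$ labels each integer $j$ by: - $\bigcirc$ if $j$ is in neither set; - $\wedge$ if $j$ is only in $I_\wedge(\lambda)$; - $\vee$ if $j$ is only in $I_\vee(\lambda,\delta)$; - $\times$ if $j$ is in both. The cap diagram $c_\lambda(\delta)$ is built iteratively: at each step, draw a cap connecting $i<j$ whenever $i$ is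 labelled $\vee$, $j$ is labelled $\wedge$, and every integer strictly between them is labelled $\bigcirc$ or $\times$ or lies on an earlier cap. Vertices joined by a cap are connected. $x_\mu(\delta)$ is linked to $x_\lambda(\delta)$ if it is obtained by interchanging labels on finitely many pairs of connected vertices of $x_\lambda(\delta)$. $D_{\lambda,\mu}(\delta)=1$ if $x_\mu(\delta)$ is linked to $x_\lambda(\delta)$, and $0$ otherwise. *)

theory Defs
  imports Main
begin

text \<open>Partitions are represented 0-indexed: a function \<open>a :: nat \<Rightarrow> nat\<close>
  with \<open>a i\<close> standing for the paper's part \<open>\<alpha>_(i+1)\<close>.\<close>

definition is_partition :: "(nat \<Rightarrow> nat) \<Rightarrow> bool" where
  "is_partition a \<longleftrightarrow> (\<forall>i. a (Suc i) \<le> a i) \<and> finite {i. a i \<noteq> 0}"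

definition psize :: "(nat \<Rightarrow> nat) \<Rightarrow> nat" where
  "psize a = (\<Sum>i\<in>{i. a i \<noteq> 0}. a i)"

type_synonym bipartition = "(nat \<Rightarrow> nat) \<times> (nat \<Rightarrow> nat)"

definition is_bipartition :: "bipartition \<Rightarrow> bool" where
  "is_bipartition l \<longleftrightarrow> is_partition (fst l) \<and> is_partition (snd l)"

definition bsize :: "bipartition \<Rightarrow> nat" where
  "bsize l = psize (fst l) + psize (snd l)"

definition bcontained :: "bipartition \<Rightarrow> bipartition \<Rightarrow> bool" where
  "bcontained l l' \<longleftrightarrow> (\<forall>i. fst l i \<le> fst l' i) \<and> (\<forall>i. snd l i \<le> snd l' i)"

text \<open>\<open>\<lambda>\<^sup>\<bullet>_(k+1) + \<lambda>\<^sup>\<circ>_(m-k+1) \<le> n\<close>, in 0-indexed form.\<close>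
definition is_cross :: "nat \<Rightarrow> nat \<Rightarrow> bipartition \<Rightarrow> bool" where
  "is_cross m n l \<longleftrightarrow> (\<exists>k\<le>m. fst l k + snd l (m - k) \<le> n)"

definition almost_cross :: "nat \<Rightarrow> nat \<Rightarrow> bipartition \<Rightarrow> bool" where
  "almost_cross m n l \<longleftrightarrow> is_bipartition l \<and> \<not> is_cross m n l \<and>
     (\<forall>l'. is_bipartition l' \<and> bcontained l' l \<and> l' \<noteq> l \<longrightarrow> is_cross m n l')"

datatype label = Circ | Up | Down | Cr

definition I_up :: "bipartition \<Rightarrow> int set" where
  "I_up l = {int (fst l i) - int i | i. True}"

text \<open>\<open>I_\<or>(\<lambda>,\<delta>) = {i - \<delta> - \<lambda>\<^sup>\<circ>_i : i \<ge> 1}\<close>, as a subset of the field; an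
  integer j belongs to it when its image in the field does.\<close>
definition I_down :: "bipartition \<Rightarrow> 'a::field \<Rightarrow> 'a set" where
  "I_down l \<delta> = {of_nat (Suc i) - \<delta> - of_nat (snd l i) | i. True}"

definition weight :: "bipartition \<Rightarrow> 'a::field \<Rightarrow> int \<Rightarrow> label" where
  "weight l \<delta> j =
     (let a = (j \<in> I_up l); b = (of_int j \<in> I_down l \<delta>) in
      if a \<and> b then Cr else if a then Up else if b then Down else Circ)"

definition cap_verts :: "(int \<times> int) set \<Rightarrow> int set" where
  "cap_verts C = fst ` C \<union> snd ` C"

definition cap_step :: "(int \<Rightarrow> label) \<Rightarrow> (int \<times> int) set \<Rightarrow> (int \<times> int) set" where
  "cap_step L C = C \<union> {(i, j). i < j \<and> L i = Down \<and> L j = Up \<and>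
      i \<notin> cap_verts C \<and> j \<notin> cap_verts C \<and>
      (\<forall>k. i < k \<and> k < j \<longrightarrow> L k = Circ \<or> L k = Cr \<or> k \<in> cap_verts C)}"

definition caps :: "(int \<Rightarrow> label) \<Rightarrow> (int \<times> int) set" where
  "caps L = (\<Union>s. (cap_step L ^^ s) {})"

definition linked :: "(int \<Rightarrow> label) \<Rightarrow> (int \<Rightarrow> label) \<Rightarrow> bool" where
  "linked L' L \<longleftrightarrow> (\<exists>S. S \<subseteq> caps L \<and> finite S \<and>
      (\<forall>(i, j)\<in>S. L' i = L j \<and> L' j = L i) \<and>
      (\<forall>k. k \<notin> cap_verts S \<longrightarrow> L' k = L k))"

definition Dcoef :: "bipartition \<Rightarrow> bipartition \<Rightarrow> 'a::field \<Rightarrow> nat" where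
  "Dcoef l u \<delta> = (if linked (weight u \<delta>) (weight l \<delta>) then 1 else 0)"

end

theory Submission
  imports Defs
begin

text \<open>Write \<open>\<delta> = m - n\<close>. An almost \<open>(m|n)\<close>-cross bipartition \<open>\<mu>\<close> is rigid: both
  partitions have at most \<open>m + 1\<close> parts and \<open>\<mu>\<^sup>\<bullet>_k + \<mu>\<^sup>\<circ>_(m-k) = n + 1\<close> for
  \<open>k \<le> m\<close>, since otherwise a removable box could be deleted without making it cross.
  Hence the first \<open>m + 1\<close> beta numbers \<open>\<mu>\<^sup>\<bullet>_k - k\<close> of \<open>\<mu>\<^sup>\<bullet>\<close> carry \<open>\<times>\<close>, every
  \<open>\<and>\<close> lies left of \<open>-m\<close> and every \<open>\<or>\<close> right of \<open>n + 1\<close>, so the cap diagram of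
  \<open>\<mu>\<close> is empty; as the weight diagram determines the bipartition, this is (i).
  For (ii), a cap of \<open>x_\<lambda>\<close> swapped in \<open>x_\<mu>\<close> supplies a beta number of \<open>\<lambda>\<^sup>\<bullet>\<close>
  above all beta numbers of \<open>\<mu>\<^sup>\<bullet>\<close>, while the crosses of \<open>x_\<mu>\<close> survive in
  \<open>x_\<lambda>\<close>; counting beta numbers gives \<open>|\<lambda>\<^sup>\<bullet>| \<ge> |\<mu>\<^sup>\<bullet>| + 2\<close>, and the
  reflection \<open>j \<mapsto> 1 - \<delta> - j\<close>, which exchanges \<open>\<bullet>\<close> and \<open>\<circ>\<close>, gives the same for
  \<open>\<circ>\<close>.\<close>

lemma is_partition_antimono:
  assumes "is_partition a" and "i \<le> j"
  shows "a j \<le> a i"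
  using assms unfolding is_partition_def by (metis lift_Suc_antimono_le)

lemma is_partition_decrement:
  assumes a: "is_partition a" and drop: "a (Suc r) < a r"
  shows "is_partition (a(r := a r - 1))"
  unfolding is_partition_def
proof
  have mono: "a (Suc i) \<le> a i" for i using a unfolding is_partition_def by blast
  show "\<forall>i. (a(r := a r - 1)) (Suc i) \<le> (a(r := a r - 1)) i"
  proof
    fix i
    consider "i = r" | "Suc i = r" | "i \<noteq> r" "Suc i \<noteq> r" by blast
    then show "(a(r := a r - 1)) (Suc i) \<le> (a(r := a r - 1)) i"
      by cases (use drop mono[of i] in auto)
  qed
  show "finite {i. (a(r := a r - 1)) i \<noteq> 0}"
    by (rule finite_subset[of _ "{i. a i \<noteq> 0}"]) (use a in \<open>auto simp: is_partition_def\<close>)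
qed

lemma partition_last_equal_part:
  assumes a: "is_partition a" and pos: "0 < a k"
  obtains r where "k \<le> r" "a r = a k" "a (Suc r) < a r"
proof -
  define T where "T = {r. k \<le> r \<and> a r = a k}"
  have fin: "finite T"
    by (rule finite_subset[of _ "{i. a i \<noteq> 0}"]) (use a pos in \<open>auto simp: T_def is_partition_def\<close>)
  define r where "r = Max T"
  have "k \<in> T" unfolding T_def by simp
  then have r: "r \<in> T" unfolding r_def using fin by (intro Max_in) auto
  have "Suc r \<notin> T"
  proof
    assume "Suc r \<in> T"
    then have "Suc r \<le> r" unfolding r_def using fin by (rule Max_ge[rotated])
    then show False by simp
  qed
  then have "a (Suc r) \<noteq> a r" using r unfolding T_def by auto
  moreover have "a (Suc r) \<le> a r" using a unfolding is_partition_def by blast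
  ultimately have "a (Suc r) < a r" by simp
  then show ?thesis using r unfolding T_def by (auto intro: that)
qed

definition beta_seq :: "(nat \<Rightarrow> nat) \<Rightarrow> nat \<Rightarrow> int" where
  "beta_seq a i = int (a i) - int i"

lemma strict_mono_uminus_beta_seq:
  assumes "is_partition a"
  shows "strict_mono (\<lambda>i. - beta_seq a i)"
proof -
  have "- beta_seq a k < - beta_seq a (Suc k)" for k
  proof -
    have "a (Suc k) \<le> a k" using assms unfolding is_partition_def by blast
    then show ?thesis by (simp add: beta_seq_def)
  qed
  then show ?thesis by (simp add: strict_mono_Suc_iff)
qed

lemma beta_seq_less_iff:
  assumes "is_partition a"
  shows "beta_seq a i < beta_seq a j \<longleftrightarrow> j < i"
  using strict_mono_less[OF strict_mono_uminus_beta_seq[OF assms], of j i] by simp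

lemma beta_seq_le_iff:
  assumes "is_partition a"
  shows "beta_seq a i \<le> beta_seq a j \<longleftrightarrow> j \<le> i"
  using strict_mono_less_eq[OF strict_mono_uminus_beta_seq[OF assms], of j i] by simp

lemma beta_seq_eq_iff:
  assumes "is_partition a"
  shows "beta_seq a i = beta_seq a j \<longleftrightarrow> i = j"
  using strict_mono_eq[OF strict_mono_uminus_beta_seq[OF assms], of i j] by simp

lemma beta_seq_le_if_prefix_eq:
  assumes a: "is_partition a" and b: "is_partition b"
    and prefix: "\<forall>j<i. beta_seq a j = beta_seq b j"
    and mem: "beta_seq b i \<in> range (beta_seq a)"
  shows "beta_seq b i \<le> beta_seq a i"
proof -
  obtain p where p: "beta_seq b i = beta_seq a p" using mem by auto
  have "\<not> p < i"
  proof
    assume "p < i"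
    then have "beta_seq b p = beta_seq b i" using prefix p by simp
    with \<open>p < i\<close> show False using beta_seq_eq_iff[OF b] by simp
  qed
  then show ?thesis using p beta_seq_le_iff[OF a] by simp
qed

lemma partition_eq_if_beta_range_eq:
  assumes a: "is_partition a" and b: "is_partition b"
    and eq: "range (beta_seq a) = range (beta_seq b)"
  shows "a = b"
proof -
  have "beta_seq a i = beta_seq b i" for i
  proof (induction i rule: less_induct)
    case (less i)
    then show ?case
      using beta_seq_le_if_prefix_eq[OF a b, of i] beta_seq_le_if_prefix_eq[OF b a, of i] eq
      by (metis antisym rangeI)
  qed
  then show ?thesis by (simp add: fun_eq_iff beta_seq_def)
qed

lemma le_beta_seq_if_card_less:
  assumes a: "is_partition a" and "finite A" and sub: "A \<subseteq> range (beta_seq a)"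
    and ge: "\<forall>x\<in>A. v \<le> x" and card: "k < card A"
  shows "v \<le> beta_seq a k"
proof (rule ccontr)
  assume "\<not> v \<le> beta_seq a k"
  have "A \<subseteq> beta_seq a ` {..<k}"
  proof
    fix x assume "x \<in> A"
    then obtain r where r: "x = beta_seq a r" using sub by auto
    have "beta_seq a k < beta_seq a r"
      using \<open>x \<in> A\<close> \<open>\<not> v \<le> beta_seq a k\<close> ge r by force
    then have "r < k" using beta_seq_less_iff[OF a] by blast
    then show "x \<in> beta_seq a ` {..<k}" using r by auto
  qed
  then have "card A \<le> card (beta_seq a ` {..<k})" by (simp add: card_mono)
  also have "\<dots> \<le> k" using card_image_le[of "{..<k}" "beta_seq a"] by simp
  finally show False using card by simp
qed

text \<open>The \<open>k + 2\<close> distinct beta numbers \<open>x, beta_seq q 0, \<dots>, beta_seq q k\<close> all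
  lie in the beta-set of \<open>p\<close> and are at least \<open>beta_seq q k\<close>.\<close>
lemma beta_seq_le_beta_seq_Suc:
  assumes p: "is_partition p" and q: "is_partition q"
    and x: "x \<in> range (beta_seq p)" "beta_seq q 0 < x"
    and betas: "\<forall>r\<le>k. beta_seq q r \<in> range (beta_seq p)"
  shows "beta_seq q k \<le> beta_seq p (Suc k)"
proof (rule le_beta_seq_if_card_less[OF p])
  let ?A = "insert x (beta_seq q ` {..k})"
  have "beta_seq q r < x" for r
    using x(2) beta_seq_le_iff[OF q, of r 0] by simp
  then have "x \<notin> beta_seq q ` {..k}" by auto
  moreover have "inj_on (beta_seq q) {..k}"
    using beta_seq_eq_iff[OF q] by (simp add: inj_on_def)
  ultimately show "Suc k < card ?A" by (simp add: card_image)
  show "?A \<subseteq> range (beta_seq p)" using x betas by auto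
  show "\<forall>y\<in>?A. beta_seq q k \<le> y"
    using x(2) beta_seq_le_iff[OF q, of k] beta_seq_le_iff[OF q, of k 0] by force
qed simp

lemma psize_add_two_le:
  assumes p: "is_partition p" and le: "\<forall>r. q r \<le> p r"
    and less: "q i < p i" "q j < p j" "i \<noteq> j"
  shows "psize q + 2 \<le> psize p"
proof -
  define S where "S = {r. p r \<noteq> 0}"
  have "finite S" using p unfolding is_partition_def S_def by simp
  have "{r. q r \<noteq> 0} \<subseteq> S"
    using le unfolding S_def by (metis (mono_tags) le_0_eq mem_Collect_eq subsetI)
  then have "psize q = sum q S"
    unfolding psize_def by (intro sum.mono_neutral_left \<open>finite S\<close>) auto
  moreover have "sum p S = sum q S + sum (\<lambda>r. p r - q r) S"
  proof -
    have "sum p S = sum (\<lambda>r. q r + (p r - q r)) S" using le by (intro sum.cong) auto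
    then show ?thesis by (simp add: sum.distrib)
  qed
  moreover have "sum (\<lambda>r. p r - q r) {i, j} \<le> sum (\<lambda>r. p r - q r) S"
    using less by (intro sum_mono2 \<open>finite S\<close>) (auto simp: S_def)
  moreover have "2 \<le> sum (\<lambda>r. p r - q r) {i, j}" using less by simp
  ultimately show ?thesis unfolding psize_def S_def by linarith
qed

text \<open>The Young diagram of \<open>p\<close> contains that of \<open>q\<close>, with an extra box in row \<open>0\<close>
  and one in row \<open>m + 1\<close>.\<close>
lemma psize_add_two_le_if_betas_mem:
  assumes p: "is_partition p" and q: "is_partition q"
    and q_vanish: "\<forall>r>m. q r = 0"
    and x: "x \<in> range (beta_seq p)" "beta_seq q 0 < x"
    and betas: "\<forall>r\<le>m. beta_seq q r \<in> range (beta_seq p)"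
  shows "psize q + 2 \<le> psize p"
proof (rule psize_add_two_le[OF p])
  have Suc_less: "q k < p (Suc k)" if "k \<le> m" for k
    using beta_seq_le_beta_seq_Suc[OF p q x, of k] betas that
    by (simp add: beta_seq_def)
  show less_0: "q 0 < p 0"
  proof -
    obtain r where "x = beta_seq p r" using x(1) by auto
    then have "x \<le> int (p 0)" using beta_seq_le_iff[OF p, of r 0] by (simp add: beta_seq_def)
    then show ?thesis using x(2) by (simp add: beta_seq_def)
  qed
  show "q (Suc m) < p (Suc m)" using Suc_less[of m] q_vanish by simp
  show "\<forall>r. q r \<le> p r"
  proof
    fix r show "q r \<le> p r"
    proof (cases r)
      case (Suc k)
      have "q (Suc k) \<le> q k" using q unfolding is_partition_def by blast
      then show ?thesis using Suc Suc_less[of k] q_vanish by (cases "k \<le> m") auto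
    qed (use less_0 in simp)
  qed
qed simp

lemma I_up_eq_range: "I_up l = range (beta_seq (fst l))"
  unfolding I_up_def beta_seq_def by auto

lemma of_int_mem_I_down_iff:
  "(of_int j :: 'a::field_char_0) \<in> I_down l (of_int d) \<longleftrightarrow> 1 - d - j \<in> I_up (prod.swap l)"
proof -
  have "(of_int j :: 'a) = of_nat (Suc i) - of_int d - of_nat (snd l i)
          \<longleftrightarrow> 1 - d - j = int (snd l i) - int i" for i
  proof -
    have "(of_nat (Suc i) - of_int d - of_nat (snd l i) :: 'a)
            = of_int (int i + 1 - d - int (snd l i))"
      by simp
    then have "(of_int j :: 'a) = of_nat (Suc i) - of_int d - of_nat (snd l i)
                 \<longleftrightarrow> j = int i + 1 - d - int (snd l i)"
      by (simp only: of_int_eq_iff)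
    then show ?thesis by linarith
  qed
  then show ?thesis unfolding I_down_def I_up_def by auto
qed

lemma weight_of_int:
  "weight l (of_int d :: 'a::field_char_0) j =
     (if j \<in> I_up l then if 1 - d - j \<in> I_up (prod.swap l) then Cr else Up
      else if 1 - d - j \<in> I_up (prod.swap l) then Down else Circ)"
  unfolding weight_def Let_def of_int_mem_I_down_iff by simp

fun mirror_label :: "label \<Rightarrow> label" where
  "mirror_label Up = Down"
| "mirror_label Down = Up"
| "mirror_label Circ = Circ"
| "mirror_label Cr = Cr"

lemma mirror_label_eq_iff [simp]:
  "mirror_label x = Up \<longleftrightarrow> x = Down"
  "mirror_label x = Down \<longleftrightarrow> x = Up"
  "mirror_label x = Cr \<longleftrightarrow> x = Cr"
  by (cases x; simp)+

lemma weight_swap: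
  "weight (prod.swap l) (of_int d :: 'a::field_char_0) j
     = mirror_label (weight l (of_int d :: 'a) (1 - d - j))"
  by (simp add: weight_of_int)

lemma I_up_eq_if_weight_eq:
  assumes "weight u \<delta> = weight l \<delta>"
  shows "I_up u = I_up l"
proof -
  have mem_iff: "j \<in> I_up w \<longleftrightarrow> weight w \<delta> j \<in> {Up, Cr}" for w j
    unfolding weight_def Let_def by auto
  show ?thesis unfolding set_eq_iff mem_iff assms by simp
qed

lemma bipartition_eq_if_weight_eq:
  assumes u: "is_bipartition u" and l: "is_bipartition l"
    and eq: "weight u (of_int d :: 'a::field_char_0) = weight l (of_int d :: 'a)"
  shows "u = l"
proof -
  have "weight (prod.swap u) (of_int d :: 'a) = weight (prod.swap l) (of_int d :: 'a)"
    unfolding fun_eq_iff weight_swap eq by simp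
  then have "I_up (prod.swap u) = I_up (prod.swap l)" by (rule I_up_eq_if_weight_eq)
  moreover have "I_up u = I_up l" using eq by (rule I_up_eq_if_weight_eq)
  ultimately show ?thesis
    using u l partition_eq_if_beta_range_eq
    unfolding is_bipartition_def I_up_eq_range by (simp add: prod_eq_iff)
qed

lemma caps_Down_Up:
  assumes "(i, j) \<in> caps L"
  shows "i < j \<and> L i = Down \<and> L j = Up"
proof -
  have "\<forall>(i, j)\<in>(cap_step L ^^ s) {}. i < j \<and> L i = Down \<and> L j = Up" for s
    by (induction s) (auto simp: cap_step_def)
  then show ?thesis using assms unfolding caps_def by blast
qed

lemma linked_Cr:
  assumes "linked L' L" and "L' k = Cr"
  shows "L k = Cr"
proof -
  obtain S where S: "S \<subseteq> caps L" "\<forall>(i, j)\<in>S. L' i = L j \<and> L' j = L i"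
    "\<forall>k. k \<notin> cap_verts S \<longrightarrow> L' k = L k"
    using assms(1) unfolding linked_def by blast
  have "L' i \<noteq> Cr \<and> L' j \<noteq> Cr" if "(i, j) \<in> S" for i j
    using that S(1,2) caps_Down_Up by fastforce
  then have "k \<notin> cap_verts S" using assms(2) unfolding cap_verts_def by force
  then show ?thesis using S(3) assms(2) by simp
qed

lemma linked_obtains_cap:
  assumes "linked L' L" and "L' \<noteq> L"
  obtains i j where "(i, j) \<in> caps L" "L i = Down" "L j = Up" "L' i = Up" "L' j = Down"
proof -
  obtain S where S: "S \<subseteq> caps L" "\<forall>(i, j)\<in>S. L' i = L j \<and> L' j = L i"
    "\<forall>k. k \<notin> cap_verts S \<longrightarrow> L' k = L k"
    using assms(1) unfolding linked_def by blast
  have "S \<noteq> {}" using S(3) assms(2) unfolding cap_verts_def by auto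
  then obtain i j where "(i, j) \<in> S" by auto
  then show ?thesis using that S(1,2) caps_Down_Up by fastforce
qed

lemma is_cross_swap: "is_cross m n (prod.swap l) \<longleftrightarrow> is_cross m n l"
proof -
  have "is_cross m n (prod.swap l)" if cross: "is_cross m n l" for l
  proof -
    obtain k where "k \<le> m" "fst l k + snd l (m - k) \<le> n"
      using cross unfolding is_cross_def by blast
    then have "m - k \<le> m \<and> fst (prod.swap l) (m - k) + snd (prod.swap l) (m - (m - k)) \<le> n"
      by simp
    then show ?thesis unfolding is_cross_def by blast
  qed
  from this[of l] this[of "prod.swap l"] show ?thesis by auto
qed

lemma almost_cross_swap: "almost_cross m n (prod.swap l) \<longleftrightarrow> almost_cross m n l"
proof -
  have "almost_cross m n (prod.swap l)" if ac: "almost_cross m n l" for l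
    unfolding almost_cross_def
  proof (intro conjI allI impI)
    show "is_bipartition (prod.swap l)" "\<not> is_cross m n (prod.swap l)"
      using ac unfolding almost_cross_def is_bipartition_def is_cross_swap by auto
    fix l' assume l': "is_bipartition l' \<and> bcontained l' (prod.swap l) \<and> l' \<noteq> prod.swap l"
    then have "is_bipartition (prod.swap l')" "bcontained (prod.swap l') l" "prod.swap l' \<noteq> l"
      unfolding is_bipartition_def bcontained_def by auto
    then have "is_cross m n (prod.swap l')" using ac unfolding almost_cross_def by blast
    then show "is_cross m n l'" by (simp add: is_cross_swap)
  qed
  from this[of l] this[of "prod.swap l"] show ?thesis by auto
qed

text \<open>Removing a removable box of \<open>fst u\<close> must make \<open>u\<close> cross, which can only happen
  at the row of that box.\<close>
lemma almost_cross_fst_box: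
  assumes ac: "almost_cross m n u" and pos: "0 < fst u k"
  obtains r where "k \<le> r" "r \<le> m" "fst u r = fst u k" "fst u r + snd u (m - r) \<le> n + 1"
proof -
  obtain b c where u: "u = (b, c)" by fastforce
  have b: "is_partition b" and c: "is_partition c" and not_cross: "\<forall>k\<le>m. n < b k + c (m - k)"
    using ac unfolding u almost_cross_def is_bipartition_def is_cross_def by auto
  obtain r where r: "k \<le> r" "b r = b k" "b (Suc r) < b r"
    using partition_last_equal_part[OF b] pos u by auto
  let ?b' = "b(r := b r - 1)"
  have "is_bipartition (?b', c)" using is_partition_decrement[OF b r(3)] c
    by (simp add: is_bipartition_def)
  moreover have "bcontained (?b', c) u" "(?b', c) \<noteq> u"
    using r pos u by (auto simp: bcontained_def fun_eq_iff)
  ultimately have "is_cross m n (?b', c)" using ac unfolding almost_cross_def by blast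
  then obtain k' where k': "k' \<le> m" "?b' k' + c (m - k') \<le> n" unfolding is_cross_def by auto
  have "k' = r"
  proof (rule ccontr)
    assume "k' \<noteq> r"
    then have "b k' + c (m - k') \<le> n" using k'(2) by simp
    moreover have "n < b k' + c (m - k')" using not_cross k'(1) by blast
    ultimately show False by simp
  qed
  then show ?thesis using that r k' u by simp
qed

lemma almost_cross_fst_eq_0:
  assumes "almost_cross m n u" and "m < r"
  shows "fst u r = 0"
proof (rule ccontr)
  assume "fst u r \<noteq> 0"
  then obtain r' where "r \<le> r'" "r' \<le> m" "fst u r' = fst u r" "fst u r' + snd u (m - r') \<le> n + 1"
    using almost_cross_fst_box[OF assms(1), of r] by blast
  then show False using assms(2) by simp
qed

lemma almost_cross_sum_le_if_fst_pos:
  assumes ac: "almost_cross m n u" and "k \<le> m" and pos: "0 < fst u k"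
  shows "fst u k + snd u (m - k) \<le> n + 1"
proof -
  obtain r where r: "k \<le> r" "r \<le> m" "fst u r = fst u k" "fst u r + snd u (m - r) \<le> n + 1"
    using almost_cross_fst_box[OF ac pos] .
  have "is_partition (snd u)" using ac unfolding almost_cross_def is_bipartition_def by blast
  then have "snd u (m - k) \<le> snd u (m - r)" using r(1) by (simp add: is_partition_antimono)
  then show ?thesis using r by simp
qed

lemma almost_cross_sum_eq:
  assumes ac: "almost_cross m n u" and k: "k \<le> m"
  shows "fst u k + snd u (m - k) = n + 1"
proof -
  have "n < fst u k + snd u (m - k)"
    using ac k unfolding almost_cross_def is_cross_def by auto
  moreover have "fst u k + snd u (m - k) \<le> n + 1"
  proof (cases "0 < fst u k")
    case True
    then show ?thesis using almost_cross_sum_le_if_fst_pos[OF ac k] by simp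
  next
    case False
    then have "0 < fst (prod.swap u) (m - k)" using \<open>n < _\<close> by simp
    then show ?thesis
      using almost_cross_sum_le_if_fst_pos[of m n "prod.swap u" "m - k"] ac k
      by (simp add: almost_cross_swap)
  qed
  ultimately show ?thesis by simp
qed

lemma almost_cross_weight_Cr:
  assumes ac: "almost_cross m n u" and r: "r \<le> m"
  shows "weight u (of_int (int m - int n) :: 'a::field_char_0) (beta_seq (fst u) r) = Cr"
proof -
  have "fst u r + snd u (m - r) = n + 1" using almost_cross_sum_eq[OF ac r] .
  then have "1 - (int m - int n) - beta_seq (fst u) r = beta_seq (snd u) (m - r)"
    using r unfolding beta_seq_def by linarith
  then show ?thesis unfolding weight_of_int I_up_eq_range by auto
qed

lemma almost_cross_weight_Up:
  assumes ac: "almost_cross m n u"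
    and up: "weight u (of_int (int m - int n) :: 'a::field_char_0) j = Up"
  shows "j < - int m"
proof -
  obtain r where r: "j = beta_seq (fst u) r"
    using up unfolding weight_of_int I_up_eq_range by (auto split: if_splits)
  have "\<not> r \<le> m" using almost_cross_weight_Cr[OF ac, where 'a = 'a] up r by auto
  then show ?thesis using almost_cross_fst_eq_0[OF ac, of r] r by (simp add: beta_seq_def)
qed

lemma almost_cross_weight_Down:
  assumes ac: "almost_cross m n u"
    and down: "weight u (of_int (int m - int n) :: 'a::field_char_0) j = Down"
  shows "int n + 2 \<le> j"
proof -
  have "weight (prod.swap u) (of_int (int m - int n) :: 'a) (1 - (int m - int n) - j) = Up"
    using down unfolding weight_swap by simp
  then have "1 - (int m - int n) - j < - int m"
    using almost_cross_weight_Up ac by (metis almost_cross_swap)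
  then show ?thesis by linarith
qed

text \<open>The \<open>\<and>\<close> end \<open>j\<close> of the cap is a beta number of \<open>\<lambda>\<^sup>\<bullet>\<close> above those of
  \<open>\<mu>\<^sup>\<bullet>\<close>, and the crosses of \<open>\<mu>\<close> include its first \<open>m + 1\<close> beta numbers.\<close>
lemma almost_cross_psize_fst_add_two_le:
  fixes m n :: nat and \<delta> :: "'a::field_char_0"
  defines "\<delta> \<equiv> of_int (int m - int n)"
  assumes ac: "almost_cross m n u" and l: "is_bipartition l"
    and up: "weight l \<delta> j = Up" and down: "weight u \<delta> j = Down"
    and Cr: "\<forall>k. weight u \<delta> k = Cr \<longrightarrow> weight l \<delta> k = Cr"
  shows "psize (fst u) + 2 \<le> psize (fst l)"
proof (rule psize_add_two_le_if_betas_mem)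
  show "is_partition (fst l)" using l unfolding is_bipartition_def by blast
  show "is_partition (fst u)" using ac unfolding almost_cross_def is_bipartition_def by blast
  show "\<forall>r>m. fst u r = 0" using almost_cross_fst_eq_0[OF ac] by blast
  show "j \<in> range (beta_seq (fst l))"
    using up unfolding \<delta>_def weight_of_int I_up_eq_range by (auto split: if_splits)
  have "fst u 0 \<le> n + 1" using almost_cross_sum_eq[OF ac, of 0] by simp
  then show "beta_seq (fst u) 0 < j"
    using almost_cross_weight_Down[OF ac down[unfolded \<delta>_def]] unfolding beta_seq_def by linarith
  show "\<forall>r\<le>m. beta_seq (fst u) r \<in> range (beta_seq (fst l))"
  proof (intro allI impI)
    fix r assume "r \<le> m"
    then have "weight l \<delta> (beta_seq (fst u) r) = Cr"
      using Cr almost_cross_weight_Cr[OF ac] unfolding \<delta>_def by blast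
    then show "beta_seq (fst u) r \<in> range (beta_seq (fst l))"
      unfolding \<delta>_def weight_of_int I_up_eq_range by (auto split: if_splits)
  qed
qed

lemma almost_cross_caps_empty:
  assumes "almost_cross m n u"
  shows "caps (weight u (of_int (int m - int n) :: 'a::field_char_0)) = {}"
  using caps_Down_Up almost_cross_weight_Up[OF assms, where 'a = 'a]
    almost_cross_weight_Down[OF assms, where 'a = 'a]
  by fastforce

lemma almost_cross_bsize_add_four_le_if_linked:
  fixes m n :: nat and \<delta> :: "'a::field_char_0"
  defines "\<delta> \<equiv> of_int (int m - int n)"
  assumes ac: "almost_cross m n u" and l: "is_bipartition l"
    and linked: "linked (weight u \<delta>) (weight l \<delta>)" and ne: "weight u \<delta> \<noteq> weight l \<delta>"
  shows "bsize u + 4 \<le> bsize l"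
proof -
  define d where "d = int m - int n"
  obtain i j where "weight l \<delta> i = Down" "weight l \<delta> j = Up"
      "weight u \<delta> i = Up" "weight u \<delta> j = Down"
    using linked_obtains_cap[OF linked ne] by metis
  moreover have Cr: "\<forall>k. weight u \<delta> k = Cr \<longrightarrow> weight l \<delta> k = Cr"
    using linked linked_Cr by blast
  ultimately have "psize (fst u) + 2 \<le> psize (fst l)"
    using almost_cross_psize_fst_add_two_le[OF ac l] unfolding \<delta>_def by blast
  moreover have "psize (snd u) + 2 \<le> psize (snd l)"
  proof -
    have "\<forall>k. weight (prod.swap u) (of_int d :: 'a) k = Cr
              \<longrightarrow> weight (prod.swap l) (of_int d :: 'a) k = Cr"
      using Cr unfolding \<delta>_def d_def[symmetric] by (simp add: weight_swap)
    then show ?thesis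
      using almost_cross_psize_fst_add_two_le[of m n "prod.swap u" "prod.swap l" "1 - d - i",
          where 'a = 'a]
        ac l \<open>weight l \<delta> i = Down\<close> \<open>weight u \<delta> i = Up\<close>
      unfolding \<delta>_def weight_swap d_def by (simp add: almost_cross_swap is_bipartition_def)
  qed
  ultimately show ?thesis unfolding bsize_def by simp
qed

theorem corollary2p8:
  fixes m n :: nat and l u :: bipartition
  assumes "is_bipartition l" and "is_bipartition u"
  shows "(almost_cross m n l \<longrightarrow> u \<noteq> l \<longrightarrow>
            Dcoef l u (of_int (int m - int n) :: 'a::field_char_0) = 0)
       \<and> (almost_cross m n u \<longrightarrow> \<not> (l = u \<or> bsize l > bsize u + 2) \<longrightarrow>
            Dcoef l u (of_int (int m - int n) :: 'a) = 0)"
proof -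
  define \<delta> where "\<delta> = (of_int (int m - int n) :: 'a)"
  have weights_differ: "weight u \<delta> \<noteq> weight l \<delta>" if "u \<noteq> l"
    using that bipartition_eq_if_weight_eq[OF assms(2,1)] unfolding \<delta>_def by blast
  show ?thesis
  proof (intro conjI impI)
    assume "almost_cross m n l" and "u \<noteq> l"
    then have "\<not> linked (weight u \<delta>) (weight l \<delta>)"
      using almost_cross_caps_empty linked_obtains_cap weights_differ unfolding \<delta>_def
      by (metis empty_iff)
    then show "Dcoef l u (of_int (int m - int n) :: 'a) = 0" by (simp add: Dcoef_def \<delta>_def)
  next
    assume "almost_cross m n u" and "\<not> (l = u \<or> bsize l > bsize u + 2)"
    then have "\<not> linked (weight u \<delta>) (weight l \<delta>)"
      using almost_cross_bsize_add_four_le_if_linked[OF _ assms(1)] weights_differ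
      unfolding \<delta>_def by fastforce
    then show "Dcoef l u (of_int (int m - int n) :: 'a) = 0" by (simp add: Dcoef_def \<delta>_def)
  qed
qed

end
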